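(* Let $r \ge 2$ be an integer. For every $a > 0$ there exists a constant $c$ such that for every partition $\Pi \in \mathcal{P}_{n,r}(\frac{1}{2r})$, every edge $e \in \Pi^c$, and every $m \ge c\, n \log n$, \[ |\mathcal{G}_m(\Pi,e) \setminus \mathcal{U}_m(\Pi,e)| \le n^{-a} |\mathcal{G}_m(\Pi,e)|. \]
   Context: All graphs have vertex set $[n]$. $\mathcal{P}_{n,r}$ is the set of partitions of $[n]$ into at most $r$ parts ($r$-colorings); $\mathcal{P}_{n,r}(\gamma)$ is the set of partitions $\{V_1,\dots,V_r\}$ of $[n]$ into $r$ parts with $(\frac1r-\gamma)n\le|V_i|\le(\frac1r+\gamma)n$ for all $i$. A partition $\Pi$ is identified with the complete multipartite graph whose parts are its classes; $e(\Pi)$ is its number of edges and $\Pi^c$ is its complement graph (the union of complete graphs on the classes). $\mathcal{G}_{m-1}(\Pi)$ is the set of subgraphs of $\Pi$ with exactly $m-1$ edges, and for $e \in \Pi^c$, $\mathcal{G}_m(\Pi,e) = \{G+e : G \in \mathcal{G}_{m-1}(\Pi)\}$. $\mathcal{U}_m(\Pi,e)$ is the set of $G \in \mathcal{G}_m(\Pi,e)$ such that $G \notin \mathcal{G}_m(\Pi',f)$ for every $\Pi' \in \mathcal{P}_{n,r}$ with $\Pi' \ne \Pi$ and every $f \in (\Pi')^c$. $\log$ is the natural logarithm. *)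

theory Defs
  imports Complex_Main "HOL-Library.Disjoint_Sets"
begin

text \<open>Vertex set [n] = {1..n}; a graph is a set of edges, an edge is a 2-element set of vertices.\<close>

definition vset :: "nat \<Rightarrow> nat set" where
  "vset n = {1..n}"

definition colorings :: "nat \<Rightarrow> nat \<Rightarrow> nat set set set" where
  "colorings n r = {P. partition_on (vset n) P \<and> card P \<le> r}"

text \<open>P_{n,r}(gamma): partitions of [n] into exactly r classes, each of size
  between (1/r - gamma) n and (1/r + gamma) n.\<close>
definition balanced_colorings :: "nat \<Rightarrow> nat \<Rightarrow> real \<Rightarrow> nat set set set" where
  "balanced_colorings n r \<gamma> = {P. partition_on (vset n) P \<and> card P = r \<and>
     (\<forall>V\<in>P. (1 / real r - \<gamma>) * real n \<le> real (card V) \<and>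
             real (card V) \<le> (1 / real r + \<gamma>) * real n)}"

definition mp_edges :: "nat \<Rightarrow> nat set set \<Rightarrow> nat set set" where
  "mp_edges n P = {{u, v} | u v. u \<in> vset n \<and> v \<in> vset n \<and> u \<noteq> v \<and>
                     \<not> (\<exists>A\<in>P. u \<in> A \<and> v \<in> A)}"

definition mp_compl :: "nat \<Rightarrow> nat set set \<Rightarrow> nat set set" where
  "mp_compl n P = {{u, v} | u v. u \<in> vset n \<and> v \<in> vset n \<and> u \<noteq> v \<and>
                     (\<exists>A\<in>P. u \<in> A \<and> v \<in> A)}"

definition Gsub :: "nat \<Rightarrow> nat set set \<Rightarrow> nat \<Rightarrow> nat set set set" where
  "Gsub n P k = {G. G \<subseteq> mp_edges n P \<and> card G = k}"

definition Gme :: "nat \<Rightarrow> nat set set \<Rightarrow> nat set \<Rightarrow> nat \<Rightarrow> nat set set set" where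
  "Gme n P e m = (\<lambda>G. insert e G) ` Gsub n P (m - 1)"

definition Ume :: "nat \<Rightarrow> nat \<Rightarrow> nat set set \<Rightarrow> nat set \<Rightarrow> nat \<Rightarrow> nat set set set" where
  "Ume n r P e m = {G \<in> Gme n P e m. \<forall>P' \<in> colorings n r. \<forall>f \<in> mp_compl n P'.
                      P' \<noteq> P \<longrightarrow> G \<notin> Gme n P' f m}"

end

theory Submission
  imports Defs "HOL-Library.FuncSet"
begin

text \<open>If \<open>G = G\<^sub>0 + e\<close> lies in \<open>G\<^sub>m(\<Pi>, e)\<close> and also in \<open>G\<^sub>m(\<Pi>', f)\<close> for a colouring \<open>\<Pi>' \<noteq> \<Pi>\<close>,
  then \<open>G\<^sub>0 \<subseteq> \<Pi>\<close> has at most one edge (namely \<open>f\<close>) in \<open>\<Pi>'\<^sup>c\<close>. Match every class \<open>V\<close> of \<open>\<Pi>\<close>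
  with a class of \<open>\<Pi>'\<close> that it meets in at least \<open>n/(8r\<^sup>2)\<close> vertices. If some class of \<open>\<Pi>'\<close> is
  matched twice, the complete bipartite graph between the two large intersections lies in \<open>\<Pi>\<close>
  and in \<open>\<Pi>'\<^sup>c\<close>. Otherwise the matching is a bijection; since \<open>\<Pi>' \<noteq> \<Pi>\<close> some vertices are
  misplaced, each class contains few of them, and the edges from a misplaced vertex to the
  correctly placed vertices of the class matched with its \<open>\<Pi>'\<close>-class again lie in \<open>\<Pi>\<close> and in
  \<open>\<Pi>'\<^sup>c\<close>. So \<open>G\<^sub>0\<close> meets one of these explicit test sets \<open>D \<subseteq> \<Pi>\<close> in at most one edge, which a
  uniformly random \<open>(m - 1)\<close>-subset of the \<open>N \<le> n\<^sup>2\<close> edges of \<open>\<Pi>\<close> does with probability at most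
  \<open>|D| exp (-(m - 1)(|D| - 1)/N)\<close>. There are at most \<open>4\<^sup>n\<close> test sets of the first kind, each with
  \<open>\<Omega>(n\<^sup>2)\<close> edges, and at most \<open>r ^ |M|\<close> of the second kind for each set \<open>M\<close> of misplaced
  vertices, each with \<open>\<Omega>(|M| n)\<close> edges; for \<open>m \<ge> c n log n\<close> the union bound is at most
  \<open>n powr (- a)\<close>.\<close>

lemma finite_vset [simp]: "finite (vset n)"
  by (simp add: vset_def)

lemma card_vset [simp]: "card (vset n) = n"
  by (simp add: vset_def)

lemma partition_on_block_unique:
  assumes "partition_on X P" "A \<in> P" "B \<in> P" "x \<in> A" "x \<in> B"
  shows "A = B"
  using assms disjointD[OF partition_onD2[OF assms(1)]] by blast

lemma partition_on_block_subset: "partition_on X P \<Longrightarrow> A \<in> P \<Longrightarrow> A \<subseteq> X"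
  by (auto dest: partition_onD1)

lemma partition_on_block_exists: "partition_on X P \<Longrightarrow> x \<in> X \<Longrightarrow> \<exists>A\<in>P. x \<in> A"
  by (auto dest: partition_onD1)

lemma mp_edges_Int_mp_compl: "mp_edges n P \<inter> mp_compl n P = {}"
  by (fastforce simp: mp_edges_def mp_compl_def doubleton_eq_iff)

lemma mp_edges_subset_pairs: "mp_edges n P \<subseteq> (\<lambda>(u, v). {u, v}) ` (vset n \<times> vset n)"
  by (auto simp: mp_edges_def)

lemma finite_mp_edges [simp]: "finite (mp_edges n P)"
  by (rule finite_subset[OF mp_edges_subset_pairs]) simp

lemma card_mp_edges_le: "card (mp_edges n P) \<le> n\<^sup>2"
proof -
  have "card (mp_edges n P) \<le> card ((\<lambda>(u, v). {u, v}) ` (vset n \<times> vset n))"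
    by (rule card_mono[OF _ mp_edges_subset_pairs]) simp
  also have "\<dots> \<le> card (vset n \<times> vset n)"
    by (rule card_image_le) simp
  finally show ?thesis
    by (simp add: power2_eq_square card_cartesian_product)
qed

lemma card_Gme:
  assumes "e \<in> mp_compl n P"
  shows "card (Gme n P e m) = card (mp_edges n P) choose (m - 1)"
proof -
  have "e \<notin> G" if "G \<in> Gsub n P (m - 1)" for G
    using that assms mp_edges_Int_mp_compl by (fastforce simp: Gsub_def)
  then have "inj_on (insert e) (Gsub n P (m - 1))"
    by (intro inj_onI) (metis Diff_insert_absorb)
  then have "card (Gme n P e m) = card (Gsub n P (m - 1))"
    by (simp add: Gme_def card_image)
  also have "\<dots> = card (mp_edges n P) choose (m - 1)"
    unfolding Gsub_def by (rule n_subsets) simp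
  finally show ?thesis .
qed

lemma Gme_diff_Ume_subset:
  "Gme n P e m - Ume n r P e m \<subseteq> insert e `
     {G \<in> Gsub n P (m - 1). \<exists>P'\<in>colorings n r. P' \<noteq> P \<and> card (G \<inter> mp_compl n P') \<le> 1}"
proof
  fix H assume H: "H \<in> Gme n P e m - Ume n r P e m"
  then obtain G where G: "G \<in> Gsub n P (m - 1)" "H = insert e G"
    unfolding Gme_def by blast
  from H obtain P' f where P': "P' \<in> colorings n r" "P' \<noteq> P" and "H \<in> Gme n P' f m"
    unfolding Ume_def by blast
  then obtain G' where G': "G' \<in> Gsub n P' (m - 1)" "H = insert f G'"
    unfolding Gme_def by blast
  have "G \<inter> mp_compl n P' \<subseteq> {f}"
    using G G' mp_edges_Int_mp_compl[of n P'] by (auto simp: Gsub_def)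
  then have "card (G \<inter> mp_compl n P') \<le> 1"
    using card_mono[of "{f}"] by fastforce
  then show "H \<in> insert e ` {G \<in> Gsub n P (m - 1). \<exists>P'\<in>colorings n r. P' \<noteq> P \<and> card (G \<inter> mp_compl n P') \<le> 1}"
    using G P' by blast
qed

lemma balanced_coloringsD:
  assumes "P \<in> balanced_colorings n r (1 / (2 * real r))" "r \<ge> 1"
  shows "partition_on (vset n) P" "card P = r" "\<And>V. V \<in> P \<Longrightarrow> real n / (2 * real r) \<le> real (card V)"
proof -
  have "1 / real r - 1 / (2 * real r) = 1 / (2 * real r)"
    using assms(2) by (simp add: field_simps)
  then show "partition_on (vset n) P" "card P = r" "\<And>V. V \<in> P \<Longrightarrow> real n / (2 * real r) \<le> real (card V)"
    using assms(1) by (auto simp: balanced_colorings_def)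
qed

section \<open>Test sets\<close>

definition cross_edges :: "nat set \<Rightarrow> nat set \<Rightarrow> nat set set" where
  "cross_edges A B = {{a, b} | a b. a \<in> A \<and> b \<in> B}"

definition escape_edges :: "nat set \<Rightarrow> (nat \<Rightarrow> nat set) \<Rightarrow> nat set set" where
  "escape_edges M \<tau> = {{v, w} | v w. v \<in> M \<and> w \<in> \<tau> v - M}"

lemma cross_edges_eq_image: "cross_edges A B = (\<lambda>(v, w). {v, w}) ` (A \<times> B)"
  by (auto simp: cross_edges_def)

lemma escape_edges_eq_image: "escape_edges M \<tau> = (\<lambda>(v, w). {v, w}) ` (SIGMA v:M. \<tau> v - M)"
  by (auto simp: escape_edges_def)

lemma inj_on_doubleton:
  assumes "\<And>p q. p \<in> S \<Longrightarrow> q \<in> S \<Longrightarrow> fst p \<noteq> snd q"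
  shows "inj_on (\<lambda>(v, w). {v, w}) S"
  by (rule inj_onI) (use assms in \<open>fastforce simp: doubleton_eq_iff\<close>)

lemma card_cross_edges: "A \<inter> B = {} \<Longrightarrow> card (cross_edges A B) = card A * card B"
  unfolding cross_edges_eq_image
  by (subst card_image) (auto intro!: inj_on_doubleton simp: card_cartesian_product)

lemma card_escape_edges:
  assumes "finite M" "\<And>v. v \<in> M \<Longrightarrow> finite (\<tau> v)"
  shows "card (escape_edges M \<tau>) = (\<Sum>v\<in>M. card (\<tau> v - M))"
  unfolding escape_edges_eq_image
  by (subst card_image) (auto intro!: inj_on_doubleton simp: assms)

definition large_cross_pairs :: "nat set set \<Rightarrow> real \<Rightarrow> (nat set \<times> nat set) set" where
  "large_cross_pairs P \<delta> = {(A, B). \<exists>V\<in>P. \<exists>V'\<in>P. V \<noteq> V' \<and> A \<subseteq> V \<and> B \<subseteq> V' \<and>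
     \<delta> \<le> real (card A) \<and> \<delta> \<le> real (card B)}"

definition small_reassignments :: "nat set set \<Rightarrow> real \<Rightarrow> (nat set \<times> (nat \<Rightarrow> nat set)) set" where
  "small_reassignments P \<delta> = {(M, \<tau>). M \<noteq> {} \<and> M \<subseteq> \<Union>P \<and> \<tau> \<in> M \<rightarrow>\<^sub>E P \<and> (\<forall>v\<in>M. v \<notin> \<tau> v) \<and>
     (\<forall>V\<in>P. real (card (V \<inter> M)) \<le> \<delta>)}"

lemma small_reassignments_mono: "\<delta> \<le> \<delta>' \<Longrightarrow> small_reassignments P \<delta> \<subseteq> small_reassignments P \<delta>'"
  by (fastforce simp: small_reassignments_def)

lemma cross_edges_subset_mp_edges:
  assumes "partition_on (vset n) P" "(A, B) \<in> large_cross_pairs P \<delta>"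
  shows "cross_edges A B \<subseteq> mp_edges n P" and "A \<inter> B = {}"
proof -
  obtain V V' where V: "V \<in> P" "V' \<in> P" "V \<noteq> V'" "A \<subseteq> V" "B \<subseteq> V'"
    using assms(2) by (auto simp: large_cross_pairs_def)
  have same_block: "V = V'" if "C \<in> P" "a \<in> A" "b \<in> B" "a \<in> C" "b \<in> C" for a b C
    using that V partition_on_block_unique[OF assms(1)] by (metis subsetD)
  then show "A \<inter> B = {}"
    using V by blast
  show "cross_edges A B \<subseteq> mp_edges n P"
  proof
    fix x assume "x \<in> cross_edges A B"
    then obtain a b where x: "x = {a, b}" "a \<in> A" "b \<in> B"
      by (auto simp: cross_edges_def)
    have "a \<in> vset n" "b \<in> vset n" "a \<noteq> b"
      using x V partition_on_block_subset[OF assms(1)] \<open>A \<inter> B = {}\<close> by blast+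
    moreover have "\<not> (\<exists>C\<in>P. a \<in> C \<and> b \<in> C)"
      using x same_block V(3) by blast
    ultimately show "x \<in> mp_edges n P"
      unfolding mp_edges_def x(1) by blast
  qed
qed

lemma escape_edges_subset_mp_edges:
  assumes "partition_on (vset n) P" "(M, \<tau>) \<in> small_reassignments P \<delta>"
  shows "escape_edges M \<tau> \<subseteq> mp_edges n P"
proof
  fix x assume "x \<in> escape_edges M \<tau>"
  then obtain v w where x: "x = {v, w}" "v \<in> M" "w \<in> \<tau> v" "w \<notin> M"
    by (auto simp: escape_edges_def)
  have \<tau>: "\<tau> v \<in> P" "v \<notin> \<tau> v" "v \<in> vset n"
    using assms x(2) partition_onD1[OF assms(1)] by (auto simp: small_reassignments_def)
  have "\<not> (\<exists>C\<in>P. v \<in> C \<and> w \<in> C)"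
    using partition_on_block_unique[OF assms(1) _ \<tau>(1)] x(3) \<tau>(2) by blast
  moreover have "w \<in> vset n"
    using partition_on_block_subset[OF assms(1) \<tau>(1)] x(3) by blast
  ultimately show "x \<in> mp_edges n P"
    using x \<tau> unfolding mp_edges_def by blast
qed

lemma cross_edges_subset_mp_compl:
  assumes "W \<in> P'" "A \<subseteq> W \<inter> vset n" "B \<subseteq> W \<inter> vset n" "A \<inter> B = {}"
  shows "cross_edges A B \<subseteq> mp_compl n P'"
proof
  fix x assume "x \<in> cross_edges A B"
  then obtain a b where "x = {a, b}" "a \<in> A" "b \<in> B"
    by (auto simp: cross_edges_def)
  moreover have "a \<noteq> b"
    using calculation assms(4) by blast
  ultimately show "x \<in> mp_compl n P'"
    using assms(1-3) unfolding mp_compl_def by blast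
qed

lemma card_cross_edges_ge:
  assumes "partition_on (vset n) P" "(A, B) \<in> large_cross_pairs P \<delta>" "0 \<le> \<delta>"
  shows "\<delta>\<^sup>2 \<le> real (card (cross_edges A B))"
proof -
  have "\<delta> \<le> real (card A)" "\<delta> \<le> real (card B)"
    using assms(2) by (auto simp: large_cross_pairs_def)
  then have "\<delta>\<^sup>2 \<le> real (card A) * real (card B)"
    unfolding power2_eq_square using assms(3) by (intro mult_mono) auto
  then show ?thesis
    using card_cross_edges[OF cross_edges_subset_mp_edges(2)[OF assms(1,2)]] by simp
qed

lemma card_escape_edges_ge:
  assumes P: "partition_on X P" "finite X" and large: "\<And>V. V \<in> P \<Longrightarrow> s \<le> real (card V)"
    and M: "(M, \<tau>) \<in> small_reassignments P \<delta>"
  shows "real (card M) * (s - \<delta>) \<le> real (card (escape_edges M \<tau>))"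
proof -
  have M': "M \<subseteq> X" "\<And>v. v \<in> M \<Longrightarrow> \<tau> v \<in> P" "\<And>V. V \<in> P \<Longrightarrow> real (card (V \<inter> M)) \<le> \<delta>"
    using M partition_onD1[OF P(1)] by (auto simp: small_reassignments_def)
  have fin: "finite M" "\<And>v. v \<in> M \<Longrightarrow> finite (\<tau> v)"
    using finite_subset[OF M'(1) P(2)] finite_subset[OF partition_on_block_subset[OF P(1) M'(2)] P(2)]
    by auto
  have "s - \<delta> \<le> real (card (\<tau> v - M))" if v: "v \<in> M" for v
  proof -
    have "card (\<tau> v - M) + card (\<tau> v \<inter> M) = card (\<tau> v)"
      using fin(2)[OF v] by (metis card_Diff_subset_Int finite_Int Int_lower1 card_mono le_add_diff_inverse2)
    then show ?thesis
      using large[OF M'(2)[OF v]] M'(3)[OF M'(2)[OF v]] by (simp add: Int_commute flip: of_nat_add)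
  qed
  then have "(\<Sum>v\<in>M. s - \<delta>) \<le> (\<Sum>v\<in>M. real (card (\<tau> v - M)))"
    by (rule sum_mono)
  then show ?thesis
    by (simp add: card_escape_edges[OF fin] mult.commute)
qed

lemma card_escape_edges_ge_balanced:
  assumes P: "P \<in> balanced_colorings n r (1 / (2 * real r))" and r: "1 \<le> r"
    and M: "(M, \<tau>) \<in> small_reassignments P (real n / (8 * real r))"
  shows "real (card M) * (real n / (4 * real r)) \<le> real (card (escape_edges M \<tau>))"
proof -
  have "real n / (4 * real r) \<le> real n / (2 * real r) - real n / (8 * real r)"
    using r by (simp add: field_simps)
  then have "real (card M) * (real n / (4 * real r))
      \<le> real (card M) * (real n / (2 * real r) - real n / (8 * real r))"
    by (rule mult_left_mono) simp
  also have "\<dots> \<le> real (card (escape_edges M \<tau>))"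
    using balanced_coloringsD[OF P r] by (intro card_escape_edges_ge[OF _ finite_vset _ M]) auto
  finally show ?thesis .
qed

lemma cross_edges_nonempty:
  assumes "partition_on (vset n) P" "(A, B) \<in> large_cross_pairs P \<delta>" "0 < \<delta>"
  shows "cross_edges A B \<noteq> {}"
  using card_cross_edges_ge[OF assms(1,2)] assms(3) by auto

lemma escape_edges_nonempty:
  assumes P: "P \<in> balanced_colorings n r (1 / (2 * real r))" and "1 \<le> r" "1 \<le> n"
    and M: "(M, \<tau>) \<in> small_reassignments P (real n / (8 * real r))"
  shows "escape_edges M \<tau> \<noteq> {}"
proof -
  have "M \<noteq> {}" "M \<subseteq> vset n"
    using M partition_onD1[OF balanced_coloringsD(1)[OF P]] assms(2)
    by (auto simp: small_reassignments_def)
  then have "0 < real (card M) * (real n / (4 * real r))"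
    using assms(2,3) by (simp add: card_gt_0_iff finite_subset)
  then show ?thesis
    using card_escape_edges_ge_balanced[OF P assms(2) M] by auto
qed

section \<open>Every other colouring contains a test set in its complement\<close>

lemma card_le_sum_card_Int:
  assumes "finite Q" "V \<subseteq> \<Union>Q"
  shows "card V \<le> (\<Sum>W\<in>Q. card (V \<inter> W))"
proof -
  have "(\<Union>W\<in>Q. V \<inter> W) = V"
    using assms(2) by blast
  then show ?thesis
    using card_UN_le[OF assms(1), of "\<lambda>W. V \<inter> W"] by simp
qed

lemma exists_heavy_block:
  assumes "finite Q" "V \<subseteq> \<Union>Q" "real (card Q) * \<delta> < real (card V)"
  shows "\<exists>W\<in>Q. \<delta> \<le> real (card (V \<inter> W))"
proof (rule ccontr)
  assume "\<not> ?thesis"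
  then have light: "real (card (V \<inter> W)) \<le> \<delta>" if "W \<in> Q" for W
    using that by (simp add: not_le less_imp_le)
  have "real (card V) \<le> (\<Sum>W\<in>Q. real (card (V \<inter> W)))"
    using card_le_sum_card_Int[OF assms(1,2)] by (simp only: of_nat_sum[symmetric] of_nat_le_iff)
  also have "\<dots> \<le> (\<Sum>W\<in>Q. \<delta>)"
    by (rule sum_mono) (rule light)
  finally show False
    using assms(3) by simp
qed

lemma card_le_if_light_blocks:
  assumes "finite Q" "finite V" "S \<subseteq> V \<inter> \<Union>(Q - {W\<^sub>0})"
    and "\<And>W. W \<in> Q - {W\<^sub>0} \<Longrightarrow> real (card (V \<inter> W)) \<le> \<delta>" "0 \<le> \<delta>"
  shows "real (card S) \<le> real (card Q) * \<delta>"
proof -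
  have "real (card S) \<le> (\<Sum>W\<in>Q - {W\<^sub>0}. real (card (S \<inter> W)))"
    using card_le_sum_card_Int[of "Q - {W\<^sub>0}" S] assms(1,3) by (simp flip: of_nat_sum)
  also have "\<dots> \<le> (\<Sum>W\<in>Q - {W\<^sub>0}. \<delta>)"
  proof (rule sum_mono)
    fix W assume W: "W \<in> Q - {W\<^sub>0}"
    have "card (S \<inter> W) \<le> card (V \<inter> W)"
      using assms(2,3) by (intro card_mono) auto
    then show "real (card (S \<inter> W)) \<le> \<delta>"
      using assms(4)[OF W] by linarith
  qed
  also have "\<dots> \<le> real (card Q) * \<delta>"
    using assms(1,5) card_Diff1_le[of Q W\<^sub>0] by (simp add: mult_right_mono)
  finally show ?thesis .
qed

lemma heavy_block_bij:
  assumes P: "partition_on X P" and P': "partition_on X P'" "finite X" "card P' \<le> card P"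
    and heavy: "\<And>V. V \<in> P \<Longrightarrow> real (card P') * \<delta> < real (card V)"
    and unique: "\<And>V V' W. V \<in> P \<Longrightarrow> V' \<in> P \<Longrightarrow> W \<in> P' \<Longrightarrow>
      \<delta> \<le> real (card (V \<inter> W)) \<Longrightarrow> \<delta> \<le> real (card (V' \<inter> W)) \<Longrightarrow> V = V'"
  obtains \<sigma> where "bij_betw \<sigma> P P'"
    "\<And>V W. V \<in> P \<Longrightarrow> W \<in> P' \<Longrightarrow> \<delta> \<le> real (card (V \<inter> W)) \<longleftrightarrow> W = \<sigma> V"
proof -
  have fin: "finite P" "finite P'"
    using finite_elements P P' by blast+
  have "\<exists>W\<in>P'. \<delta> \<le> real (card (V \<inter> W))" if "V \<in> P" for V
    using exists_heavy_block[OF fin(2) _ heavy[OF that]] partition_on_block_subset[OF P that]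
      partition_onD1[OF P'(1)] by blast
  then obtain \<sigma> where \<sigma>: "\<And>V. V \<in> P \<Longrightarrow> \<sigma> V \<in> P' \<and> \<delta> \<le> real (card (V \<inter> \<sigma> V))"
    by metis
  have inj: "inj_on \<sigma> P"
    using \<sigma> unique by (metis inj_onI)
  have "\<sigma> ` P = P'"
    by (rule card_seteq[OF fin(2)]) (use \<sigma> P'(3) card_image[OF inj] in auto)
  then have bij: "bij_betw \<sigma> P P'"
    by (simp add: bij_betw_def inj)
  have "\<delta> \<le> real (card (V \<inter> W)) \<longleftrightarrow> W = \<sigma> V" if "V \<in> P" "W \<in> P'" for V W
    using that \<sigma> unique \<open>\<sigma> ` P = P'\<close> by blast
  with bij that show thesis
    by blast
qed

lemma partition_on_eq_if_blocks_subset: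
  assumes P: "partition_on X P" and P': "partition_on X P'" and \<sigma>: "bij_betw \<sigma> P P'"
    and sub: "\<And>V. V \<in> P \<Longrightarrow> V \<subseteq> \<sigma> V"
  shows "P' = P"
proof -
  have "\<sigma> V = V" if V: "V \<in> P" for V
  proof
    show "\<sigma> V \<subseteq> V"
    proof
      fix x assume x: "x \<in> \<sigma> V"
      have \<sigma>V: "\<sigma> V \<in> P'"
        using \<sigma> V bij_betwE by blast
      then obtain V2 where V2: "V2 \<in> P" "x \<in> V2"
        using x partition_on_block_subset[OF P'] partition_on_block_exists[OF P] by blast
      then have "\<sigma> V2 = \<sigma> V"
        using partition_on_block_unique[OF P' _ \<sigma>V] sub \<sigma> x bij_betwE by blast
      then show "x \<in> V"
        using V V2 \<sigma> by (metis bij_betw_def inj_onD)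
    qed
  qed (use sub V in blast)
  then show ?thesis
    using \<sigma> by (metis bij_betw_def image_cong image_ident)
qed

lemma escape_edges_subset_mp_compl:
  assumes P: "partition_on (vset n) P" and \<sigma>: "\<And>V. V \<in> P \<Longrightarrow> \<sigma> V \<in> P'"
    and M: "M = {v \<in> vset n. \<forall>V\<in>P. v \<in> V \<longrightarrow> v \<notin> \<sigma> V}"
    and \<tau>: "\<And>v. v \<in> M \<Longrightarrow> \<tau> v \<in> P \<and> v \<in> \<sigma> (\<tau> v) \<and> v \<notin> \<tau> v"
  shows "escape_edges M \<tau> \<subseteq> mp_compl n P'"
proof
  fix x assume "x \<in> escape_edges M \<tau>"
  then obtain v w where x: "x = {v, w}" "v \<in> M" "w \<in> \<tau> v" "w \<notin> M"
    by (auto simp: escape_edges_def)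
  have v: "v \<in> vset n" "\<tau> v \<in> P" "v \<in> \<sigma> (\<tau> v)" "v \<noteq> w"
    using x M \<tau> by auto
  have w: "w \<in> vset n"
    using partition_on_block_subset[OF P v(2)] x(3) by blast
  then obtain V where V: "V \<in> P" "w \<in> V" "w \<in> \<sigma> V"
    using x(4) M by blast
  then have "V = \<tau> v"
    using partition_on_block_unique[OF P V(1) v(2)] x(3) by blast
  then show "x \<in> mp_compl n P'"
    unfolding mp_compl_def using x(1) v w V(3) \<sigma>[OF v(2)] by blast
qed

lemma misplaced_vertices_reassignment:
  assumes P: "partition_on (vset n) P" and P': "partition_on (vset n) P'" and \<sigma>: "bij_betw \<sigma> P P'"
    and light: "\<And>V W. V \<in> P \<Longrightarrow> W \<in> P' \<Longrightarrow> W \<noteq> \<sigma> V \<Longrightarrow> real (card (V \<inter> W)) \<le> \<delta>"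
    and "0 \<le> \<delta>" and M: "M = {v \<in> vset n. \<forall>V\<in>P. v \<in> V \<longrightarrow> v \<notin> \<sigma> V}" "M \<noteq> {}"
  obtains \<tau> where "(M, \<tau>) \<in> small_reassignments P (real (card P') * \<delta>)"
    and "escape_edges M \<tau> \<subseteq> mp_compl n P'"
proof -
  have M_iff: "v \<in> M \<longleftrightarrow> v \<in> vset n \<and> (\<forall>V\<in>P. v \<in> V \<longrightarrow> v \<notin> \<sigma> V)" for v
    using M(1) by simp
  define \<tau> where "\<tau> = restrict (\<lambda>v. SOME V. V \<in> P \<and> v \<in> \<sigma> V) M"
  have \<tau>: "\<tau> v \<in> P \<and> v \<in> \<sigma> (\<tau> v)" if v: "v \<in> M" for v
  proof -
    obtain W where "W \<in> P'" "v \<in> W"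
      using v M_iff partition_on_block_exists[OF P'] by blast
    then have "\<exists>V. V \<in> P \<and> v \<in> \<sigma> V"
      using bij_betw_imp_surj_on[OF \<sigma>] by blast
    then have "(SOME V. V \<in> P \<and> v \<in> \<sigma> V) \<in> P \<and> v \<in> \<sigma> (SOME V. V \<in> P \<and> v \<in> \<sigma> V)"
      by (rule someI_ex)
    then show ?thesis
      using v by (simp add: \<tau>_def)
  qed
  have not_in: "v \<notin> \<tau> v" if "v \<in> M" for v
    using \<tau>[OF that] that M_iff by blast
  have "real (card (V \<inter> M)) \<le> real (card P') * \<delta>" if V: "V \<in> P" for V
  proof (rule card_le_if_light_blocks)
    show "finite P'"
      using finite_elements[OF finite_vset P'] .
    show "finite V"
      using finite_subset[OF partition_on_block_subset[OF P V]] by simp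
    show "V \<inter> M \<subseteq> V \<inter> \<Union>(P' - {\<sigma> V})"
      using V M_iff partition_on_block_exists[OF P'] by blast
  qed (use light V \<open>0 \<le> \<delta>\<close> in auto)
  moreover have "escape_edges M \<tau> \<subseteq> mp_compl n P'"
    using \<tau> not_in bij_betwE[OF \<sigma>] by (intro escape_edges_subset_mp_compl[OF P _ M(1)]) auto
  moreover have "M \<subseteq> \<Union>P" "\<tau> \<in> M \<rightarrow>\<^sub>E P"
    using M_iff partition_onD1[OF P] \<tau> by (auto simp: \<tau>_def)
  ultimately show thesis
    using M(2) not_in that[of \<tau>] by (simp add: small_reassignments_def)
qed

lemma cross_test_set_of_shared_block:
  assumes P: "partition_on (vset n) P" and V: "V \<in> P" "V' \<in> P" "V \<noteq> V'" "W \<in> P'"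
    and heavy: "\<delta> \<le> real (card (V \<inter> W))" "\<delta> \<le> real (card (V' \<inter> W))"
  shows "(V \<inter> W, V' \<inter> W) \<in> large_cross_pairs P \<delta>"
    and "cross_edges (V \<inter> W) (V' \<inter> W) \<subseteq> mp_compl n P'"
proof -
  show "(V \<inter> W, V' \<inter> W) \<in> large_cross_pairs P \<delta>"
    using V heavy by (auto simp: large_cross_pairs_def)
  have "V \<inter> W \<inter> (V' \<inter> W) = {}"
    using partition_on_block_unique[OF P V(1,2)] V(3) by blast
  then show "cross_edges (V \<inter> W) (V' \<inter> W) \<subseteq> mp_compl n P'"
    using V partition_on_block_subset[OF P] by (intro cross_edges_subset_mp_compl) auto
qed

lemma block_matching_of_no_cross_test_set:
  assumes r: "r \<ge> 2" and n: "n \<ge> 1" and P: "P \<in> balanced_colorings n r (1 / (2 * real r))"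
    and P': "P' \<in> colorings n r"
    and no_cross: "\<And>A B. (A, B) \<in> large_cross_pairs P (real n / (8 * real r ^ 2)) \<Longrightarrow>
      \<not> cross_edges A B \<subseteq> mp_compl n P'"
  obtains \<sigma> where "bij_betw \<sigma> P P'"
    and "\<And>V W. V \<in> P \<Longrightarrow> W \<in> P' \<Longrightarrow> W \<noteq> \<sigma> V \<Longrightarrow> real (card (V \<inter> W)) \<le> real n / (8 * real r ^ 2)"
proof -
  define \<delta> :: real where "\<delta> = real n / (8 * real r ^ 2)"
  have pP: "partition_on (vset n) P" and cP: "card P = r"
    and large: "\<And>V. V \<in> P \<Longrightarrow> real n / (2 * real r) \<le> real (card V)"
    using balanced_coloringsD[OF P] r by auto
  have pP': "partition_on (vset n) P'" and cP': "card P' \<le> r"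
    using P' by (auto simp: colorings_def)
  have "real (card P') * \<delta> \<le> real r * \<delta>"
    using cP' by (intro mult_right_mono) (auto simp: \<delta>_def)
  also have "\<dots> = real n / (8 * real r)"
    using r by (simp add: \<delta>_def power2_eq_square)
  also have "\<dots> < real n / (2 * real r)"
    using n r by (intro divide_strict_left_mono) auto
  finally have heavy: "real (card P') * \<delta> < real (card V)" if "V \<in> P" for V
    using large[OF that] by linarith
  have unique: "V = V'" if "V \<in> P" "V' \<in> P" "W \<in> P'"
    "\<delta> \<le> real (card (V \<inter> W))" "\<delta> \<le> real (card (V' \<inter> W))" for V V' W
    using cross_test_set_of_shared_block[OF pP that(1,2) _ that(3-5)] no_cross
    unfolding \<delta>_def by blast
  have "card P' \<le> card P"
    using cP cP' by simp
  obtain \<sigma> where "bij_betw \<sigma> P P'"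
    and heavy_iff: "\<And>V W. V \<in> P \<Longrightarrow> W \<in> P' \<Longrightarrow> \<delta> \<le> real (card (V \<inter> W)) \<longleftrightarrow> W = \<sigma> V"
    by (rule heavy_block_bij[OF pP pP' finite_vset \<open>card P' \<le> card P\<close> heavy]) (use unique in blast)+
  moreover have "real (card (V \<inter> W)) \<le> \<delta>" if "V \<in> P" "W \<in> P'" "W \<noteq> \<sigma> V" for V W
    using heavy_iff[OF that(1,2)] that(3) by linarith
  ultimately show thesis
    using that unfolding \<delta>_def by blast
qed

lemma exists_test_set_in_mp_compl:
  assumes r: "r \<ge> 2" and n: "n \<ge> 1" and P: "P \<in> balanced_colorings n r (1 / (2 * real r))"
    and P': "P' \<in> colorings n r" "P' \<noteq> P"
  shows "(\<exists>(A, B)\<in>large_cross_pairs P (real n / (8 * real r ^ 2)). cross_edges A B \<subseteq> mp_compl n P') \<or>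
    (\<exists>(M, \<tau>)\<in>small_reassignments P (real n / (8 * real r)). escape_edges M \<tau> \<subseteq> mp_compl n P')"
proof (rule ccontr)
  assume contra: "\<not> ?thesis"
  have pP: "partition_on (vset n) P" and pP': "partition_on (vset n) P'" and cP': "card P' \<le> r"
    using balanced_coloringsD[OF P] r P'(1) by (auto simp: colorings_def)
  have "\<not> cross_edges A B \<subseteq> mp_compl n P'"
    if "(A, B) \<in> large_cross_pairs P (real n / (8 * real r ^ 2))" for A B
    using contra that by blast
  then obtain \<sigma> where \<sigma>: "bij_betw \<sigma> P P'"
    and light: "\<And>V W. V \<in> P \<Longrightarrow> W \<in> P' \<Longrightarrow> W \<noteq> \<sigma> V \<Longrightarrow> real (card (V \<inter> W)) \<le> real n / (8 * real r ^ 2)"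
    using block_matching_of_no_cross_test_set[OF r n P P'(1)] by metis
  define M where "M = {v \<in> vset n. \<forall>V\<in>P. v \<in> V \<longrightarrow> v \<notin> \<sigma> V}"
  have "M \<noteq> {}"
  proof
    assume "M = {}"
    have "V \<subseteq> \<sigma> V" if V: "V \<in> P" for V
    proof
      fix v assume "v \<in> V"
      moreover have "v \<notin> M"
        using \<open>M = {}\<close> by simp
      ultimately obtain V2 where "V2 \<in> P" "v \<in> V2" "v \<in> \<sigma> V2"
        using partition_on_block_subset[OF pP V] by (auto simp: M_def)
      then show "v \<in> \<sigma> V"
        using partition_on_block_unique[OF pP V] \<open>v \<in> V\<close> by blast
    qed
    then show False
      using partition_on_eq_if_blocks_subset[OF pP pP' \<sigma>] P'(2) by blast
  qed
  then obtain \<tau> where "(M, \<tau>) \<in> small_reassignments P (real (card P') * (real n / (8 * real r ^ 2)))"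
    and "escape_edges M \<tau> \<subseteq> mp_compl n P'"
    using misplaced_vertices_reassignment[OF pP pP' \<sigma> light _ M_def] by auto
  moreover have "real (card P') * (real n / (8 * real r ^ 2)) \<le> real n / (8 * real r)"
    using cP' r mult_right_mono[of "real (card P')" "real r" "real n / (8 * real r ^ 2)"]
    by (simp add: power2_eq_square)
  ultimately show False
    using small_reassignments_mono contra by blast
qed

lemma choose_pred_le:
  fixes M k N :: nat
  assumes "1 \<le> M" "M \<le> N" "k \<le> N"
  shows "real ((M - 1) choose k) \<le> (1 - real k / real N) * real (M choose k)"
proof -
  have "real (M - k) * real (M choose k) = real M * real ((M - 1) choose k)"
    using binomial_absorb_comp[of M k] by (metis of_nat_mult)
  then have "real ((M - 1) choose k) = real (M - k) / real M * real (M choose k)"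
    using assms by (simp add: field_simps)
  also have "\<dots> \<le> (1 - real k / real N) * real (M choose k)"
  proof (rule mult_right_mono)
    show "real (M - k) / real M \<le> 1 - real k / real N"
    proof (cases "k \<le> M")
      case True
      have "real k / real N \<le> real k / real M"
        using assms by (intro divide_left_mono) auto
      then show ?thesis
        using True assms by (simp add: diff_divide_distrib)
    qed (use assms in simp)
  qed simp
  finally show ?thesis .
qed

lemma choose_diff_le_exp:
  fixes N k j :: nat
  assumes "j \<le> N" "k \<le> N"
  shows "real ((N - j) choose k) \<le> exp (- (real k * real j / real N)) * real (N choose k)"
proof -
  have q: "0 \<le> 1 - real k / real N" "1 - real k / real N \<le> exp (- (real k / real N))"
    using assms exp_ge_add_one_self[of "- (real k / real N)"] by (auto simp: divide_le_eq_1)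
  have "real ((N - j) choose k) \<le> (1 - real k / real N) ^ j * real (N choose k)"
    using assms(1)
  proof (induction j)
    case (Suc j)
    have "real ((N - Suc j) choose k) \<le> (1 - real k / real N) * real ((N - j) choose k)"
      using choose_pred_le[of "N - j" N k] Suc.prems assms(2) by simp
    also have "\<dots> \<le> (1 - real k / real N) * ((1 - real k / real N) ^ j * real (N choose k))"
      using Suc q(1) by (intro mult_left_mono) auto
    finally show ?case
      by (simp add: mult.assoc)
  qed simp
  also have "\<dots> \<le> exp (- (real k / real N)) ^ j * real (N choose k)"
    using q by (intro mult_right_mono power_mono) auto
  also have "exp (- (real k / real N)) ^ j = exp (- (real k * real j / real N))"
    by (simp flip: exp_of_nat_mult)
  finally show ?thesis .
qed

definition subsets_meeting_at_most_once :: "'a set \<Rightarrow> nat \<Rightarrow> 'a set \<Rightarrow> 'a set set" where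
  "subsets_meeting_at_most_once E k D = {G. G \<subseteq> E \<and> card G = k \<and> card (G \<inter> D) \<le> 1}"

lemma subsets_meeting_at_most_once_subset:
  assumes "finite E" "D \<noteq> {}"
  shows "subsets_meeting_at_most_once E k D \<subseteq> (\<Union>x\<in>D. {G. G \<subseteq> E - (D - {x}) \<and> card G = k})"
proof
  fix G assume G: "G \<in> subsets_meeting_at_most_once E k D"
  then have "finite G" "card (G \<inter> D) \<le> 1"
    using assms(1) finite_subset by (auto simp: subsets_meeting_at_most_once_def)
  then obtain x where "x \<in> D" "G \<inter> D \<subseteq> {x}"
  proof (cases "G \<inter> D = {}")
    case False
    with \<open>finite G\<close> \<open>card (G \<inter> D) \<le> 1\<close> have "card (G \<inter> D) = 1"
      by (simp add: le_Suc_eq)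
    then show thesis
      using that by (metis card_1_singletonE Int_lower2 insert_subset order_refl)
  qed (use assms(2) in blast)
  then show "G \<in> (\<Union>x\<in>D. {G. G \<subseteq> E - (D - {x}) \<and> card G = k})"
    using G by (auto simp: subsets_meeting_at_most_once_def)
qed

lemma card_subsets_meeting_at_most_once_le_choose:
  assumes E: "finite E" and D: "D \<subseteq> E" "D \<noteq> {}"
  shows "card (subsets_meeting_at_most_once E k D) \<le> card D * ((card E - (card D - 1)) choose k)"
proof -
  let ?avoid = "\<lambda>x. {G. G \<subseteq> E - (D - {x}) \<and> card G = k}"
  have fin: "finite D" "finite (\<Union>x\<in>D. ?avoid x)"
    using D E finite_subset by (blast, auto intro: finite_subset[of _ "Pow E"])
  have "card (subsets_meeting_at_most_once E k D) \<le> card (\<Union>x\<in>D. ?avoid x)"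
    by (rule card_mono[OF fin(2) subsets_meeting_at_most_once_subset[OF E D(2)]])
  also have "\<dots> \<le> (\<Sum>x\<in>D. card (?avoid x))"
    using fin(1) by (rule card_UN_le)
  also have "\<dots> = card D * ((card E - (card D - 1)) choose k)"
  proof -
    have "card (?avoid x) = (card E - (card D - 1)) choose k" if "x \<in> D" for x
    proof -
      have "card (E - (D - {x})) = card E - (card D - 1)"
        using D fin that by (simp add: card_Diff_subset subset_trans[OF Diff_subset])
      then show ?thesis
        using n_subsets[of "E - (D - {x})" k] E by simp
    qed
    then show ?thesis
      by simp
  qed
  finally show ?thesis .
qed

lemma card_subsets_meeting_at_most_once:
  assumes E: "finite E" and D: "D \<subseteq> E" "D \<noteq> {}" and k: "k \<le> card E"
  shows "real (card (subsets_meeting_at_most_once E k D))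
    \<le> exp 1 * real (card E) * exp (- (real k * real (card D) / real (card E))) * real (card E choose k)"
proof -
  define N where "N = card E"
  define d where "d = card D"
  have "finite D"
    using D E finite_subset by blast
  then have d: "1 \<le> d" "d \<le> N"
    using D E card_mono by (auto simp: d_def N_def Suc_le_eq card_gt_0_iff)
  have "real (card (subsets_meeting_at_most_once E k D)) \<le> real d * real ((N - (d - 1)) choose k)"
    using card_subsets_meeting_at_most_once_le_choose[OF E D, of k]
    unfolding N_def d_def by (simp flip: of_nat_mult)
  also have "\<dots> \<le> real d * (exp (- (real k * real (d - 1) / real N)) * real (N choose k))"
    using d k by (intro mult_left_mono choose_diff_le_exp) (auto simp: N_def)
  also have "exp (- (real k * real (d - 1) / real N)) = exp (real k / real N) * exp (- (real k * real d / real N))"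
    using d by (simp add: diff_divide_distrib right_diff_distrib flip: exp_add)
  also have "real d * (\<dots> * real (N choose k)) \<le> real N * (exp 1 * exp (- (real k * real d / real N)) * real (N choose k))"
    using d k by (intro mult_mono) (auto simp: N_def divide_le_eq_1)
  finally show ?thesis
    by (simp add: N_def d_def mult_ac)
qed

lemma sum_power_card_Pow:
  fixes z :: "'a :: comm_semiring_1"
  shows "finite S \<Longrightarrow> (\<Sum>X\<in>Pow S. z ^ card X) = (1 + z) ^ card S"
  using prod_add[of S "\<lambda>_. z" "\<lambda>_. 1"] by (simp add: add.commute)

lemma finite_Sigma_Pow_PiE:
  assumes "finite S" "finite P"
  shows "finite (SIGMA M:Pow S - {{}}. M \<rightarrow>\<^sub>E P)"
proof (rule finite_SigmaI)
  fix M assume "M \<in> Pow S - {{}}"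
  then have "M \<subseteq> S"
    by blast
  then have "finite M"
    using assms(1) by (rule finite_subset)
  then show "finite (M \<rightarrow>\<^sub>E P)"
    using assms(2) by (rule finite_PiE)
qed (use assms in simp)

lemma sum_PiE_nonempty_power:
  fixes y :: real
  assumes "finite S" "finite P"
  shows "(\<Sum>(M, \<tau>)\<in>(SIGMA M:Pow S - {{}}. M \<rightarrow>\<^sub>E P). y ^ card M) = (1 + real (card P) * y) ^ card S - 1"
proof -
  have fin: "finite (M \<rightarrow>\<^sub>E P)" if "M \<in> Pow S - {{}}" for M
    using that assms finite_subset by (auto intro!: finite_PiE)
  have "(\<Sum>(M, \<tau>)\<in>(SIGMA M:Pow S - {{}}. M \<rightarrow>\<^sub>E P). y ^ card M)
      = (\<Sum>M\<in>Pow S - {{}}. (real (card P) * y) ^ card M)"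
    using assms fin
    by (subst sum.Sigma[symmetric]) (auto simp: card_PiE finite_subset power_mult_distrib intro!: sum.cong)
  also have "\<dots> = (\<Sum>M\<in>Pow S. (real (card P) * y) ^ card M) - 1"
    using assms by (simp add: sum_diff1)
  finally show ?thesis
    using sum_power_card_Pow[OF assms(1)] by simp
qed

lemma ln_ge_half: "2 \<le> x \<Longrightarrow> 1 / 2 \<le> ln (x :: real)"
  using exp_half_le2 by (subst ln_ge_iff) auto

lemma exp_neg_le_exp_one_mult_powr:
  fixes x b t :: real
  assumes "0 < x" "b * ln x - 1 \<le> t"
  shows "exp (- t) \<le> exp 1 * x powr (- b)"
proof -
  have "exp (- t) \<le> exp (1 + - b * ln x)"
    using assms(2) by simp
  also have "\<dots> = exp 1 * exp (- b * ln x)"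
    by (rule exp_add)
  also have "exp (- b * ln x) = x powr (- b)"
    using assms(1) by (simp add: powr_def)
  finally show ?thesis .
qed

lemma four_pow_exp_neg_two_n_ln_le:
  fixes n :: nat and a :: real
  assumes "0 \<le> a" "a + 16 \<le> real n"
  shows "4 ^ n * (exp 1 ^ 2 * real n ^ 2) * exp (- (2 * real n * ln (real n))) \<le> real n powr (- a) / 2"
proof -
  have n: "16 \<le> real n"
    using assms by linarith
  have "(4::real) ^ n \<le> real n ^ n"
    using n by (intro power_mono) auto
  then have "(4::real) ^ n \<le> real n powr real n"
    using n by (simp add: powr_realpow)
  moreover have "exp 1 ^ 2 * real n ^ 2 \<le> real n powr 4 / 2"
  proof -
    have "exp 1 ^ 2 \<le> (3::real) ^ 2"
      by (rule power_mono[OF exp_le]) simp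
    moreover have "18 \<le> real n ^ 2"
      using mult_mono[of 16 "real n" 16 "real n"] n by (simp add: power2_eq_square)
    ultimately have "exp 1 ^ 2 \<le> real n ^ 2 / 2"
      by simp
    then have "exp 1 ^ 2 * real n ^ 2 \<le> real n ^ 2 / 2 * real n ^ 2"
      by (rule mult_right_mono) simp
    also have "\<dots> = real n powr 4 / 2"
      using n by (simp add: eval_nat_numeral)
    finally show ?thesis .
  qed
  moreover have "exp (- (2 * real n * ln (real n))) = real n powr (- 2 * real n)"
    using n by (simp add: powr_def)
  ultimately have "4 ^ n * (exp 1 ^ 2 * real n ^ 2) * exp (- (2 * real n * ln (real n)))
      \<le> real n powr real n * (real n powr 4 / 2) * real n powr (- 2 * real n)"
    by (intro mult_mono) auto
  also have "\<dots> = real n powr (real n + 4 + - 2 * real n) / 2"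
    by (simp only: powr_add)
  also have "\<dots> = real n powr (4 - real n) / 2"
    by simp
  also have "\<dots> \<le> real n powr (- a) / 2"
    using assms n by (intro divide_right_mono powr_mono) auto
  finally show ?thesis .
qed

lemma one_plus_power_minus_one_le:
  fixes z :: real
  assumes "0 \<le> z" "real n * z \<le> 1 / 2"
  shows "(1 + z) ^ n - 1 \<le> 2 * (real n * z)"
proof -
  have "(1 + z) ^ n \<le> exp z ^ n"
    using assms exp_ge_add_one_self[of z] by (intro power_mono) auto
  also have "\<dots> = exp (real n * z)"
    by (simp flip: exp_of_nat_mult)
  also have "\<dots> \<le> 1 + 2 * (real n * z)"
    using assms by (intro real_exp_bound_lemma) auto
  finally show ?thesis
    by simp
qed

lemma n_square_one_plus_power_sub_one_le:
  fixes n r :: nat and a z :: real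
  assumes "0 \<le> a" "1 \<le> r" "36 * real r \<le> real n" "0 \<le> z"
    and z: "z \<le> exp 1 * real r * real n powr (- (a + 4))"
  shows "exp 1 * real n ^ 2 * ((1 + z) ^ n - 1) \<le> real n powr (- a) / 2"
proof -
  define q where "q = real n powr (- a)"
  have n: "36 \<le> real n"
    using assms by linarith
  have q: "0 < q" "q \<le> 1"
    using assms n by (auto simp: q_def intro: order_trans[OF powr_mono[of "- a" 0]])
  have "real n powr (- (a + 4)) = real n powr (- a) * real n powr (- 4)"
    by (simp flip: powr_add)
  also have "real n powr (- 4) = 1 / real n ^ 4"
    using n by (simp add: powr_minus divide_inverse)
  finally have "real n powr (- (a + 4)) = q / real n ^ 4"
    by (simp add: q_def)
  then have "real n * z \<le> real n * (exp 1 * real r * (q / real n ^ 4))"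
    using z n by (intro mult_left_mono) auto
  also have "\<dots> = exp 1 * real r * q / real n ^ 3"
    using n by (simp add: eval_nat_numeral field_simps)
  also have "\<dots> \<le> 3 * real r * q / real n ^ 3"
    using q n exp_le by (intro divide_right_mono mult_right_mono) auto
  finally have nz: "real n * z \<le> 3 * real r * q / real n ^ 3" .
  have "3 * real r * q \<le> 3 * real r"
    using q mult_left_mono[of q 1 "3 * real r"] by simp
  then have "3 * real r * q / real n ^ 3 \<le> real n / real n ^ 3"
    using assms(3) by (intro divide_right_mono) auto
  also have "\<dots> = 1 / real n ^ 2"
    using n by (simp add: power_eq_if)
  also have "\<dots> \<le> 1 / 2"
    using mult_mono[of 1 "real n" 2 "real n"] n by (simp add: power2_eq_square)
  finally have "3 * real r * q / real n ^ 3 \<le> 1 / 2" .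
  then have "(1 + z) ^ n - 1 \<le> 2 * (real n * z)"
    using nz by (intro one_plus_power_minus_one_le \<open>0 \<le> z\<close>) linarith
  then have "(1 + z) ^ n - 1 \<le> 2 * (3 * real r * q / real n ^ 3)"
    using nz by linarith
  then have "exp 1 * real n ^ 2 * ((1 + z) ^ n - 1) \<le> exp 1 * real n ^ 2 * (2 * (3 * real r * q / real n ^ 3))"
    by (intro mult_left_mono) auto
  also have "\<dots> = 6 * exp 1 * real r / real n * q"
    using n by (simp add: field_simps power_eq_if)
  also have "\<dots> \<le> 1 / 2 * q"
  proof (rule mult_right_mono)
    have "6 * exp 1 * real r \<le> real n / 2"
      using mult_right_mono[OF exp_le, of "real r"] assms(3) by linarith
    then show "6 * exp 1 * real r / real n \<le> 1 / 2"
      using n by (simp add: divide_simps)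
  qed (use q in simp)
  finally show ?thesis
    by (simp add: q_def)
qed

section \<open>The union bound\<close>

lemma large_cross_pairs_subset:
  "partition_on (vset n) P \<Longrightarrow> large_cross_pairs P \<delta> \<subseteq> Pow (vset n) \<times> Pow (vset n)"
  using partition_on_block_subset[of "vset n" P] by (fastforce simp: large_cross_pairs_def)

lemma small_reassignments_subset:
  assumes "partition_on (vset n) P"
  shows "small_reassignments P \<delta> \<subseteq> (SIGMA M:Pow (vset n) - {{}}. M \<rightarrow>\<^sub>E P)"
  using partition_onD1[OF assms] by (auto simp: small_reassignments_def)

lemma finite_large_cross_pairs: "partition_on (vset n) P \<Longrightarrow> finite (large_cross_pairs P \<delta>)"
  by (rule finite_subset[OF large_cross_pairs_subset]) auto

lemma finite_small_reassignments:
  assumes "partition_on (vset n) P"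
  shows "finite (small_reassignments P \<delta>)"
proof (rule finite_subset[OF small_reassignments_subset[OF assms]])
  show "finite (SIGMA M:Pow (vset n) - {{}}. M \<rightarrow>\<^sub>E P)"
    by (rule finite_Sigma_Pow_PiE[OF finite_vset finite_elements[OF finite_vset assms]])
qed

lemma meets_test_set_at_most_once:
  assumes r: "r \<ge> 2" and n: "n \<ge> 1" and P: "P \<in> balanced_colorings n r (1 / (2 * real r))"
    and P': "P' \<in> colorings n r" "P' \<noteq> P"
    and G: "G \<subseteq> mp_edges n P" "card G = k" "card (G \<inter> mp_compl n P') \<le> 1"
  shows "G \<in> (\<Union>(A, B)\<in>large_cross_pairs P (real n / (8 * real r ^ 2)).
      subsets_meeting_at_most_once (mp_edges n P) k (cross_edges A B)) \<union>
    (\<Union>(M, \<tau>)\<in>small_reassignments P (real n / (8 * real r)).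
      subsets_meeting_at_most_once (mp_edges n P) k (escape_edges M \<tau>))"
proof -
  have meets: "G \<in> subsets_meeting_at_most_once (mp_edges n P) k D" if "D \<subseteq> mp_compl n P'" for D
  proof -
    have "card (G \<inter> D) \<le> card (G \<inter> mp_compl n P')"
      using that finite_subset[OF G(1)] by (intro card_mono) auto
    then show ?thesis
      using G by (simp add: subsets_meeting_at_most_once_def)
  qed
  from exists_test_set_in_mp_compl[OF r n P P'] show ?thesis
  proof (elim disjE)
    assume "\<exists>(A, B)\<in>large_cross_pairs P (real n / (8 * real r ^ 2)). cross_edges A B \<subseteq> mp_compl n P'"
    then obtain A B where "(A, B) \<in> large_cross_pairs P (real n / (8 * real r ^ 2))"
      "cross_edges A B \<subseteq> mp_compl n P'"
      by blast
    then show ?thesis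
      using meets by blast
  next
    assume "\<exists>(M, \<tau>)\<in>small_reassignments P (real n / (8 * real r)). escape_edges M \<tau> \<subseteq> mp_compl n P'"
    then obtain M \<tau> where "(M, \<tau>) \<in> small_reassignments P (real n / (8 * real r))"
      "escape_edges M \<tau> \<subseteq> mp_compl n P'"
      by blast
    then show ?thesis
      using meets by blast
  qed
qed

lemma card_Gme_diff_Ume_le:
  fixes m :: nat
  assumes r: "r \<ge> 2" and n: "n \<ge> 1" and P: "P \<in> balanced_colorings n r (1 / (2 * real r))"
  defines "E \<equiv> mp_edges n P" and "k \<equiv> m - 1"
  shows "card (Gme n P e m - Ume n r P e m) \<le>
    (\<Sum>(A, B)\<in>large_cross_pairs P (real n / (8 * real r ^ 2)).
      card (subsets_meeting_at_most_once E k (cross_edges A B))) +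
    (\<Sum>(M, \<tau>)\<in>small_reassignments P (real n / (8 * real r)).
      card (subsets_meeting_at_most_once E k (escape_edges M \<tau>)))"
proof -
  define bad where
    "bad = {G \<in> Gsub n P k. \<exists>P'\<in>colorings n r. P' \<noteq> P \<and> card (G \<inter> mp_compl n P') \<le> 1}"
  define U1 where "U1 = (\<Union>(A, B)\<in>large_cross_pairs P (real n / (8 * real r ^ 2)).
      subsets_meeting_at_most_once E k (cross_edges A B))"
  define U2 where "U2 = (\<Union>(M, \<tau>)\<in>small_reassignments P (real n / (8 * real r)).
      subsets_meeting_at_most_once E k (escape_edges M \<tau>))"
  have pP: "partition_on (vset n) P"
    using balanced_coloringsD[OF P] r by simp
  have "bad \<subseteq> Pow E" "U1 \<union> U2 \<subseteq> Pow E"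
    by (auto simp: bad_def Gsub_def U1_def U2_def subsets_meeting_at_most_once_def E_def)
  moreover have "finite (Pow E)"
    by (simp add: E_def)
  ultimately have fin: "finite bad" "finite (U1 \<union> U2)"
    by (auto intro: finite_subset)
  have "bad \<subseteq> U1 \<union> U2"
  proof
    fix G assume "G \<in> bad"
    then obtain P' where "P' \<in> colorings n r" "P' \<noteq> P" "G \<subseteq> E" "card G = k"
      "card (G \<inter> mp_compl n P') \<le> 1"
      by (auto simp: bad_def Gsub_def E_def)
    then show "G \<in> U1 \<union> U2"
      unfolding U1_def U2_def E_def by (rule meets_test_set_at_most_once[OF r n P])
  qed
  have "card (Gme n P e m - Ume n r P e m) \<le> card (insert e ` bad)"
    using Gme_diff_Ume_subset[of n P e m r] fin by (intro card_mono) (auto simp: bad_def k_def)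
  also have "\<dots> \<le> card bad"
    using fin by (intro card_image_le)
  also have "\<dots> \<le> card U1 + card U2"
    using card_mono[OF fin(2) \<open>bad \<subseteq> U1 \<union> U2\<close>] card_Un_le[of U1 U2] by linarith
  also have "\<dots> \<le> (\<Sum>(A, B)\<in>large_cross_pairs P (real n / (8 * real r ^ 2)).
      card (subsets_meeting_at_most_once E k (cross_edges A B))) +
    (\<Sum>(M, \<tau>)\<in>small_reassignments P (real n / (8 * real r)).
      card (subsets_meeting_at_most_once E k (escape_edges M \<tau>)))"
    unfolding U1_def U2_def
    by (intro add_mono card_UN_le[THEN order_trans] finite_large_cross_pairs[OF pP]
        finite_small_reassignments[OF pP]) (simp_all add: prod.case_distrib)
  finally show ?thesis .
qed

lemma card_subsets_meeting_at_most_once_mp_edges: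
  assumes D: "D \<subseteq> mp_edges n P" "D \<noteq> {}" and k: "k \<le> card (mp_edges n P)"
  shows "real (card (subsets_meeting_at_most_once (mp_edges n P) k D))
    \<le> exp 1 * real n ^ 2 * exp (- (real k * real (card D) / real n ^ 2)) * real (card (mp_edges n P) choose k)"
proof -
  define N where "N = card (mp_edges n P)"
  have N: "0 < N" "real N \<le> real n ^ 2"
    using D card_mp_edges_le[of n P] by (auto simp: N_def card_gt_0_iff dest: finite_subset)
  have "real k * real (card D) / real n ^ 2 \<le> real k * real (card D) / real N"
    using N by (intro divide_left_mono) (auto simp: zero_less_mult_iff intro!: Nat.gr0I)
  then have "exp (- (real k * real (card D) / real N)) \<le> exp (- (real k * real (card D) / real n ^ 2))"
    by simp
  then have "exp 1 * real N * exp (- (real k * real (card D) / real N)) * real (N choose k)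
      \<le> exp 1 * real n ^ 2 * exp (- (real k * real (card D) / real n ^ 2)) * real (N choose k)"
    using N by (intro mult_right_mono mult_mono) auto
  with card_subsets_meeting_at_most_once[OF finite_mp_edges D k] show ?thesis
    unfolding N_def by (rule order_trans)
qed

lemma card_large_cross_pairs_le:
  assumes "partition_on (vset n) P"
  shows "card (large_cross_pairs P \<delta>) \<le> 4 ^ n"
proof -
  have "card (large_cross_pairs P \<delta>) \<le> card (Pow (vset n) \<times> Pow (vset n))"
    using large_cross_pairs_subset[OF assms] by (intro card_mono) auto
  then show ?thesis
    by (simp add: card_cartesian_product card_Pow flip: power_mult_distrib)
qed

lemma exp_cross_weight_le:
  assumes P: "partition_on (vset n) P" and n: "0 < n"
    and AB: "(A, B) \<in> large_cross_pairs P (real n / (8 * real r ^ 2))"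
  shows "exp (- (real k * real (card (cross_edges A B)) / real n ^ 2)) \<le> exp (- (real k / (64 * real r ^ 4)))"
proof -
  have "(real n / (8 * real r ^ 2))\<^sup>2 \<le> real (card (cross_edges A B))"
    using card_cross_edges_ge[OF P AB] by simp
  then have "real n ^ 2 / (64 * real r ^ 4) \<le> real (card (cross_edges A B))"
    by (simp add: power_divide power_mult_distrib flip: power_mult)
  then have "real k * (real n ^ 2 / (64 * real r ^ 4)) / real n ^ 2
      \<le> real k * real (card (cross_edges A B)) / real n ^ 2"
    by (intro divide_right_mono mult_left_mono) auto
  then show ?thesis
    using n by simp
qed

lemma exp_escape_weight_le:
  assumes P: "P \<in> balanced_colorings n r (1 / (2 * real r))" and r: "1 \<le> r" and n: "0 < n"
    and M: "(M, \<tau>) \<in> small_reassignments P (real n / (8 * real r))"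
  shows "exp (- (real k * real (card (escape_edges M \<tau>)) / real n ^ 2))
    \<le> exp (- (real k / (4 * real r * real n))) ^ card M"
proof -
  have "real k * (real (card M) * (real n / (4 * real r))) / real n ^ 2
      \<le> real k * real (card (escape_edges M \<tau>)) / real n ^ 2"
    using card_escape_edges_ge_balanced[OF P r M] by (intro divide_right_mono mult_left_mono) auto
  moreover have "real k * (real (card M) * (real n / (4 * real r))) / real n ^ 2
      = real (card M) * (real k / (4 * real r * real n))"
    using n by (simp add: power2_eq_square field_simps)
  ultimately have "exp (- (real k * real (card (escape_edges M \<tau>)) / real n ^ 2))
      \<le> exp (- (real (card M) * (real k / (4 * real r * real n))))"
    by simp
  also have "\<dots> = exp (- (real k / (4 * real r * real n))) ^ card M"
    unfolding exp_of_nat_mult[symmetric] by simp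
  finally show ?thesis .
qed

lemma sum_cross_weights_le:
  assumes P: "partition_on (vset n) P" and a: "0 \<le> a" "a + 16 \<le> real n"
    and k: "2 * real n * ln (real n) - 1 \<le> real k / (64 * real r ^ 4)"
  shows "(\<Sum>(A, B)\<in>large_cross_pairs P (real n / (8 * real r ^ 2)).
      exp 1 * real n ^ 2 * exp (- (real k * real (card (cross_edges A B)) / real n ^ 2)))
    \<le> real n powr (- a) / 2"
proof -
  define I where "I = large_cross_pairs P (real n / (8 * real r ^ 2))"
  define T where "T = exp 1 ^ 2 * real n ^ 2 * exp (- (2 * real n * ln (real n)))"
  have n: "0 < n"
    using a by linarith
  have k': "exp (- (real k / (64 * real r ^ 4))) \<le> exp 1 * exp (- (2 * real n * ln (real n)))"
    using k by (simp flip: exp_add)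
  have each: "exp 1 * real n ^ 2 * exp (- (real k * real (card (cross_edges A B)) / real n ^ 2)) \<le> T"
    if "(A, B) \<in> I" for A B
  proof -
    have "exp (- (real k * real (card (cross_edges A B)) / real n ^ 2))
        \<le> exp 1 * exp (- (2 * real n * ln (real n)))"
      using exp_cross_weight_le[OF P n that[unfolded I_def]] k' by (rule order_trans)
    then have "exp 1 * real n ^ 2 * exp (- (real k * real (card (cross_edges A B)) / real n ^ 2))
        \<le> exp 1 * real n ^ 2 * (exp 1 * exp (- (2 * real n * ln (real n))))"
      by (rule mult_left_mono) simp
    also have "\<dots> = T"
      by (simp add: T_def power2_eq_square mult_ac)
    finally show ?thesis .
  qed
  have "(\<Sum>(A, B)\<in>I. exp 1 * real n ^ 2 * exp (- (real k * real (card (cross_edges A B)) / real n ^ 2)))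
      \<le> (\<Sum>_\<in>I. T)"
    using each by (intro sum_mono) auto
  also have "\<dots> \<le> 4 ^ n * T"
    using card_large_cross_pairs_le[OF P] of_nat_mono[OF card_large_cross_pairs_le[OF P]]
    by (simp add: I_def T_def mult_right_mono)
  also have "\<dots> \<le> real n powr (- a) / 2"
    using four_pow_exp_neg_two_n_ln_le[OF a] by (simp add: T_def mult_ac)
  finally show ?thesis
    by (simp add: I_def)
qed

lemma sum_escape_weights_le:
  assumes P: "P \<in> balanced_colorings n r (1 / (2 * real r))" and r: "1 \<le> r"
    and a: "0 \<le> a" "36 * real r \<le> real n"
    and k: "(a + 4) * ln (real n) - 1 \<le> real k / (4 * real r * real n)"
  shows "(\<Sum>(M, \<tau>)\<in>small_reassignments P (real n / (8 * real r)).
      exp 1 * real n ^ 2 * exp (- (real k * real (card (escape_edges M \<tau>)) / real n ^ 2)))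
    \<le> real n powr (- a) / 2"
proof -
  define I where "I = small_reassignments P (real n / (8 * real r))"
  define S where "S = (SIGMA M:Pow (vset n) - {{}}. M \<rightarrow>\<^sub>E P)"
  define y where "y = exp (- (real k / (4 * real r * real n)))"
  have pP: "partition_on (vset n) P" and cP: "card P = r"
    using balanced_coloringsD[OF P r] by auto
  have n: "0 < n"
    using a r by linarith
  have "y \<le> exp 1 * real n powr (- (a + 4))"
    unfolding y_def using n k by (intro exp_neg_le_exp_one_mult_powr) auto
  then have "real r * y \<le> real r * (exp 1 * real n powr (- (a + 4)))"
    by (rule mult_left_mono) simp
  then have y: "real r * y \<le> exp 1 * real r * real n powr (- (a + 4))"
    by (simp only: mult_ac)
  have "(\<Sum>(M, \<tau>)\<in>I. exp 1 * real n ^ 2 * exp (- (real k * real (card (escape_edges M \<tau>)) / real n ^ 2)))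
      \<le> (\<Sum>(M, \<tau>)\<in>I. exp 1 * real n ^ 2 * y ^ card M)"
  proof (rule sum_mono)
    fix x assume "x \<in> I"
    then show "(case x of (M, \<tau>) \<Rightarrow> exp 1 * real n ^ 2 * exp (- (real k * real (card (escape_edges M \<tau>)) / real n ^ 2)))
        \<le> (case x of (M, \<tau>) \<Rightarrow> exp 1 * real n ^ 2 * y ^ card M)"
      using exp_escape_weight_le[OF P r n, of _ _ k] mult_left_mono[of _ _ "exp 1 * real n ^ 2"]
      by (cases x) (simp add: I_def y_def)
  qed
  also have "\<dots> \<le> (\<Sum>(M, \<tau>)\<in>S. exp 1 * real n ^ 2 * y ^ card M)"
  proof (rule sum_mono2)
    show "finite S"
      unfolding S_def by (rule finite_Sigma_Pow_PiE[OF finite_vset finite_elements[OF finite_vset pP]])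
    show "I \<subseteq> S"
      unfolding I_def S_def by (rule small_reassignments_subset[OF pP])
  qed (simp add: case_prod_unfold y_def)
  also have "\<dots> = exp 1 * real n ^ 2 * (\<Sum>(M, \<tau>)\<in>S. y ^ card M)"
    by (simp add: sum_distrib_left case_prod_unfold)
  also have "\<dots> = exp 1 * real n ^ 2 * ((1 + real r * y) ^ n - 1)"
    using sum_PiE_nonempty_power[OF finite_vset finite_elements[OF finite_vset pP], of y] cP
    by (simp add: S_def)
  also have "\<dots> \<le> real n powr (- a) / 2"
    using n_square_one_plus_power_sub_one_le[OF a(1) r a(2) _ y] by (simp add: y_def)
  finally show ?thesis
    by (simp add: I_def)
qed

lemma mult_sub_one_le_divide:
  fixes q t x c k :: real
  assumes "1 \<le> q" "0 \<le> x" "q * t \<le> c" "c * x - 1 \<le> k"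
  shows "t * x - 1 \<le> k / q"
proof -
  have "q * (t * x) - 1 \<le> k"
    using assms mult_right_mono[OF assms(3,2)] by (simp add: mult.assoc)
  then have "(q * (t * x) - 1) / q \<le> k / q"
    using assms(1) by (intro divide_right_mono) auto
  then have "t * x - 1 / q \<le> k / q"
    using assms(1) by (simp add: diff_divide_distrib)
  moreover have "1 / q \<le> 1"
    using assms(1) by simp
  ultimately show ?thesis
    by linarith
qed

lemma ln_budgets:
  assumes r: "1 \<le> r" and n: "1 \<le> n" and c: "4 * real r * (a + 4) \<le> c" "128 * real r ^ 4 \<le> c"
    and m: "c * real n * ln (real n) \<le> real m"
  shows "2 * real n * ln (real n) - 1 \<le> real (m - 1) / (64 * real r ^ 4)"
    and "(a + 4) * ln (real n) - 1 \<le> real (m - 1) / (4 * real r * real n)"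
proof -
  have ln: "0 \<le> ln (real n)"
    using n by simp
  have "m \<le> (m - 1) + 1"
    by simp
  then have k: "c * (real n * ln (real n)) - 1 \<le> real (m - 1)" "c * real n * ln (real n) - 1 \<le> real (m - 1)"
    using m by (simp_all add: mult.assoc)
  have "1 \<le> real r ^ 4"
    using r by simp
  then have "2 * (real n * ln (real n)) - 1 \<le> real (m - 1) / (64 * real r ^ 4)"
    using c(2) ln by (intro mult_sub_one_le_divide[OF _ _ _ k(1)]) auto
  then show "2 * real n * ln (real n) - 1 \<le> real (m - 1) / (64 * real r ^ 4)"
    by (simp add: mult.assoc)
  have "1 * 1 \<le> real r * real n"
    using r n by (intro mult_mono) auto
  then show "(a + 4) * ln (real n) - 1 \<le> real (m - 1) / (4 * real r * real n)"
    using ln mult_right_mono[OF c(1), of "real n"]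
    by (intro mult_sub_one_le_divide[OF _ _ _ k(2)]) (auto simp: mult_ac)
qed

lemma card_Gme_diff_Ume_le_fraction:
  assumes r: "r \<ge> 2" and a: "0 \<le> a" and P: "P \<in> balanced_colorings n r (1 / (2 * real r))"
    and e: "e \<in> mp_compl n P" and n: "a + 36 * real r + 16 \<le> real n"
    and c: "4 * real r * (a + 4) \<le> c" "128 * real r ^ 4 \<le> c"
    and m: "c * real n * ln (real n) \<le> real m" and mE: "m - 1 \<le> card (mp_edges n P)"
  shows "real (card (Gme n P e m - Ume n r P e m)) \<le> real n powr (- a) * real (card (Gme n P e m))"
proof -
  define E where "E = mp_edges n P"
  define k where "k = m - 1"
  define C where "C = real (card E choose k)"
  define w where "w D = exp 1 * real n ^ 2 * exp (- (real k * real (card D) / real n ^ 2))" for D :: "nat set set"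
  have pP: "partition_on (vset n) P"
    using balanced_coloringsD[OF P] r by simp
  have n1: "1 \<le> n" and n36: "36 * real r \<le> real n" and n16: "a + 16 \<le> real n"
    using n a r by linarith+
  have test_set: "real (card (subsets_meeting_at_most_once E k D)) \<le> w D * C"
    if "D \<subseteq> mp_edges n P" "D \<noteq> {}" for D
    using card_subsets_meeting_at_most_once_mp_edges[OF that mE] by (simp add: w_def C_def E_def k_def)
  have "real (card (Gme n P e m - Ume n r P e m))
      \<le> (\<Sum>(A, B)\<in>large_cross_pairs P (real n / (8 * real r ^ 2)).
          real (card (subsets_meeting_at_most_once E k (cross_edges A B)))) +
        (\<Sum>(M, \<tau>)\<in>small_reassignments P (real n / (8 * real r)).
          real (card (subsets_meeting_at_most_once E k (escape_edges M \<tau>))))"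
    using card_Gme_diff_Ume_le[OF r n1 P, of e m] unfolding E_def k_def
    by (simp add: case_prod_unfold flip: of_nat_sum of_nat_add)
  also have "\<dots> \<le> (\<Sum>(A, B)\<in>large_cross_pairs P (real n / (8 * real r ^ 2)). w (cross_edges A B)) * C +
      (\<Sum>(M, \<tau>)\<in>small_reassignments P (real n / (8 * real r)). w (escape_edges M \<tau>)) * C"
  proof -
    have "0 < real n / (8 * real r ^ 2)"
      using n1 r by simp
    then have "real (card (subsets_meeting_at_most_once E k (cross_edges A B))) \<le> w (cross_edges A B) * C"
      if "(A, B) \<in> large_cross_pairs P (real n / (8 * real r ^ 2))" for A B
      by (intro test_set cross_edges_subset_mp_edges(1)[OF pP that] cross_edges_nonempty[OF pP that])
    moreover have "real (card (subsets_meeting_at_most_once E k (escape_edges M \<tau>))) \<le> w (escape_edges M \<tau>) * C"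
      if "(M, \<tau>) \<in> small_reassignments P (real n / (8 * real r))" for M \<tau>
      using r by (intro test_set escape_edges_subset_mp_edges[OF pP that] escape_edges_nonempty[OF P _ n1 that]) auto
    ultimately show ?thesis
      unfolding sum_distrib_right by (intro add_mono sum_mono) auto
  qed
  also have "\<dots> \<le> real n powr (- a) / 2 * C + real n powr (- a) / 2 * C"
    using sum_cross_weights_le[OF pP a n16] sum_escape_weights_le[OF P _ a n36]
      ln_budgets[OF _ n1 c m] r
    by (intro add_mono mult_right_mono) (auto simp: w_def C_def k_def mult.assoc)
  also have "\<dots> = real n powr (- a) * real (card (Gme n P e m))"
    by (simp add: card_Gme[OF e] C_def E_def k_def)
  finally show ?thesis .
qed

lemma two_le_if_mp_compl: "e \<in> mp_compl n P \<Longrightarrow> 2 \<le> n"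
proof -
  assume "e \<in> mp_compl n P"
  then obtain u v where "u \<in> vset n" "v \<in> vset n" "u \<noteq> v"
    by (auto simp: mp_compl_def)
  then have "card {u, v} \<le> card (vset n)"
    by (intro card_mono) auto
  with \<open>u \<noteq> v\<close> show ?thesis
    by simp
qed

lemma Gme_eq_empty:
  assumes "card (mp_edges n P) < m - 1"
  shows "Gme n P e m = {}"
proof -
  have "G \<notin> Gsub n P (m - 1)" for G
    using card_mono[OF finite_mp_edges, of G n P] assms by (auto simp: Gsub_def)
  then show ?thesis
    by (auto simp: Gme_def)
qed

lemma large_n_if_m_le_square:
  fixes n m :: nat
  assumes "2 \<le> n" "0 \<le> B" "2 * (B + 1) \<le> c" "c * real n * ln (real n) \<le> real m" "m - 1 \<le> n\<^sup>2"
  shows "B \<le> real n"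
proof (rule ccontr)
  assume "\<not> B \<le> real n"
  have ln: "1 / 2 \<le> ln (real n)"
    by (rule ln_ge_half) (use assms(1) in simp)
  have "(real n + 1) * real n < (B + 1) * real n"
    using \<open>\<not> B \<le> real n\<close> assms(1) by (intro mult_strict_right_mono) auto
  also have "\<dots> = 2 * (B + 1) * (real n * (1 / 2))"
    by simp
  also have "\<dots> \<le> c * (real n * ln (real n))"
    using assms ln by (intro mult_mono) auto
  also have "\<dots> \<le> real m"
    using assms(4) by (simp add: mult.assoc)
  finally have "real (n\<^sup>2 + n) < real m"
    by (simp add: algebra_simps power2_eq_square)
  then show False
    using assms(1,5) by linarith
qed

lemma card_Gme_diff_Ume_le_if_many_edges:
  assumes r: "r \<ge> 2" and a: "0 \<le> a" and P: "P \<in> balanced_colorings n r (1 / (2 * real r))"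
    and e: "e \<in> mp_compl n P"
    and c: "4 * real r * (a + 4) \<le> c" "128 * real r ^ 4 \<le> c" "2 * (a + 36 * real r + 17) \<le> c"
    and m: "c * real n * ln (real n) \<le> real m"
  shows "real (card (Gme n P e m - Ume n r P e m)) \<le> real n powr (- a) * real (card (Gme n P e m))"
proof (cases "m - 1 \<le> card (mp_edges n P)")
  case True
  have "m - 1 \<le> n\<^sup>2"
    by (rule order_trans[OF True card_mp_edges_le])
  then have "a + 36 * real r + 16 \<le> real n"
    using c(3) a by (intro large_n_if_m_le_square[OF two_le_if_mp_compl[OF e] _ _ m]) auto
  then show ?thesis
    by (rule card_Gme_diff_Ume_le_fraction[OF r a P e _ c(1,2) m True])
qed (simp add: Gme_eq_empty)

theorem lemma5p4:
  fixes r :: nat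
  assumes "r \<ge> 2"
  shows "\<forall>a::real. a > 0 \<longrightarrow> (\<exists>c::real. c > 0 \<and>
           (\<forall>(n::nat) P e (m::nat).
              P \<in> balanced_colorings n r (1 / (2 * real r)) \<longrightarrow>
              e \<in> mp_compl n P \<longrightarrow>
              real m \<ge> c * real n * ln (real n) \<longrightarrow>
              real (card (Gme n P e m - Ume n r P e m))
                \<le> real n powr (- a) * real (card (Gme n P e m))))"
proof (intro allI impI)
  fix a :: real
  assume a: "a > 0"
  define c where "c = 4 * real r * (a + 4) + 128 * real r ^ 4 + 2 * (a + 36 * real r + 17)"
  have c: "4 * real r * (a + 4) \<le> c" "128 * real r ^ 4 \<le> c" "2 * (a + 36 * real r + 17) \<le> c"
    using a by (simp_all add: c_def)
  moreover have "0 < 2 * (a + 36 * real r + 17)"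
    using a by simp
  ultimately show "\<exists>c::real. c > 0 \<and> (\<forall>n P e m. P \<in> balanced_colorings n r (1 / (2 * real r)) \<longrightarrow>
    e \<in> mp_compl n P \<longrightarrow> real m \<ge> c * real n * ln (real n) \<longrightarrow>
    real (card (Gme n P e m - Ume n r P e m)) \<le> real n powr (- a) * real (card (Gme n P e m)))"
    using card_Gme_diff_Ume_le_if_many_edges[OF assms less_imp_le[OF a] _ _ c] by (intro exI[of _ c]) auto
qed

end
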